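(* Under the standing assumptions below, for every $k\ge d+1$ and every $x\in W$, $$\lim_{r\to0^+}p_k(x,r)=p_k.$$
   Context: Standing assumptions: $\mu$ is an absolutely continuous measure on $\mathbb{R}^d$ with continuous density $f:\mathbb{R}^d\to[0,\infty)$; $W\subset\mathbb{R}^d$ is compact and convex with $f>0$ on $W$. $\mathbf{B}(x,r)$ is the open Euclidean ball. For a finite counting measure $\nu$ and $x\in\mathbb{R}^d$, $N(x,\nu)=\{y:\|x-y\|\le\|y-x'\|\text{ for all }x'\in\nu,\ x'\ne x\}$ is the Voronoi cell of $x$ generated by $\nu+\delta_x$. For $x\in W$ and $r>0$, let $X_1^{(x,r)},X_2^{(x,r)},\dots$ be i.i.d. random points in $\mathbb{R}^d$ with $\mathbb{P}(X_i^{(x,r)}\in E)=\mu(\mathbf{B}(x,2r)\cap E)/\mu(\mathbf{B}(x,2r))$, and set $p_k(x,r)=\mathbb{P}\big(N(x,\sum_{j=1}^k\delta_{X_j^{(x,r)}})\subseteq\mathbf{B}(x,r)\big)$. Also $p_k=\mathbb{P}\big(N(0,\sum_{j=1}^k\delta_{Y_j})\subseteq\mathbf{B}(0,1)\big)$ with $Y_1,\dots,Y_k$ independent and uniformly distributed in $\mathbf{B}(0,2)$. *)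

theory Defs
  imports "HOL-Probability.Probability"
begin

text \<open>Voronoi cell of x generated by the point configuration S together with x
  (multiplicities of a counting measure are irrelevant for the cell).\<close>
definition voronoi_cell :: "'a::euclidean_space \<Rightarrow> 'a set \<Rightarrow> 'a set" where
  "voronoi_cell x S = {y. \<forall>x'\<in>S. x' \<noteq> x \<longrightarrow> norm (x - y) \<le> norm (y - x')}"

definition pk_xr :: "'a::euclidean_space measure \<Rightarrow> 'a \<Rightarrow> real \<Rightarrow> nat \<Rightarrow> real" where
  "pk_xr mu x r k =
     measure (PiM {..<k} (\<lambda>_. uniform_measure mu (ball x (2*r))))
       {ys \<in> space (PiM {..<k} (\<lambda>_. uniform_measure mu (ball x (2*r)))).
          voronoi_cell x (ys ` {..<k}) \<subseteq> ball x r}"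

definition pk :: "nat \<Rightarrow> 'a::euclidean_space itself \<Rightarrow> real" where
  "pk k _ =
     measure (PiM {..<k} (\<lambda>_. uniform_measure (lborel :: 'a measure) (ball 0 2)))
       {ys \<in> space (PiM {..<k} (\<lambda>_. uniform_measure (lborel :: 'a measure) (ball 0 2))).
          voronoi_cell (0::'a) (ys ` {..<k}) \<subseteq> ball 0 1}"

end

theory Submission
  imports Defs
begin

(* The affine map z \<mapsto> x + r z carries B(0,2) onto B(x,2r), B(0,1) onto B(x,r) and Voronoi
   cells onto Voronoi cells, so for the uniform law on B(x,2r) the probability equals p_k exactly.
   Since f is continuous and positive at x, for small r we have (1-d) f(x) <= f <= (1+d) f(x) on
   B(x,2r); then the normalised restriction of mu and the uniform law on B(x,2r) have densities
   with respect to each other bounded by c = (1+d)/(1-d).  Their k-fold products are therefore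
   mutually bounded by the factor c^k, so every event has probabilities differing by at most
   c^k - 1, which tends to 0 with d. *)

lemma PiM_density:
  fixes N :: "'a measure" and g :: "'a \<Rightarrow> ennreal"
  assumes I: "finite I" and N: "sigma_finite_measure N" "sigma_finite_measure (density N g)"
    and g[measurable]: "g \<in> borel_measurable N"
  shows "PiM I (\<lambda>_. density N g) = density (PiM I (\<lambda>_. N)) (\<lambda>\<omega>. \<Prod>i\<in>I. g (\<omega> i))"
proof -
  interpret D: product_sigma_finite "\<lambda>_. density N g"
    unfolding product_sigma_finite_def using N by simp
  interpret NN: product_sigma_finite "\<lambda>_. N"
    unfolding product_sigma_finite_def using N by simp
  show ?thesis
  proof (rule D.PiM_eqI[symmetric])
    show "sets (density (PiM I (\<lambda>_. N)) (\<lambda>\<omega>. \<Prod>i\<in>I. g (\<omega> i))) = sets (PiM I (\<lambda>_. density N g))"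
      by (simp cong: sets_PiM_cong)
    fix A assume "\<And>i. i \<in> I \<Longrightarrow> A i \<in> sets (density N g)"
    then have A: "\<And>i. i \<in> I \<Longrightarrow> A i \<in> sets N" by simp
    then have "PiE I A \<in> sets (PiM I (\<lambda>_. N))"
      using I by (intro sets_PiM_I_finite) auto
    then have "emeasure (density (PiM I (\<lambda>_. N)) (\<lambda>\<omega>. \<Prod>i\<in>I. g (\<omega> i))) (PiE I A)
        = (\<integral>\<^sup>+\<omega>. (\<Prod>i\<in>I. g (\<omega> i)) * indicator (PiE I A) \<omega> \<partial>PiM I (\<lambda>_. N))"
      by (simp add: emeasure_density)
    also have "\<dots> = (\<integral>\<^sup>+\<omega>. (\<Prod>i\<in>I. g (\<omega> i) * indicator (A i) (\<omega> i)) \<partial>PiM I (\<lambda>_. N))"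
      by (intro nn_integral_cong)
         (auto simp: space_PiM prod.distrib indicator_def PiE_def Pi_def I)
    also have "\<dots> = (\<Prod>i\<in>I. emeasure (density N g) (A i))"
      using A I by (subst NN.product_nn_integral_prod) (auto intro!: prod.cong simp: emeasure_density)
    finally show "emeasure (density (PiM I (\<lambda>_. N)) (\<lambda>\<omega>. \<Prod>i\<in>I. g (\<omega> i))) (PiE I A)
        = (\<Prod>i\<in>I. emeasure (density N g) (A i))" .
  qed fact
qed

lemma emeasure_PiM_density_le:
  fixes N :: "'a measure" and p q :: "'a \<Rightarrow> ennreal"
  assumes I: "finite I" and N: "sigma_finite_measure N"
    and sf: "sigma_finite_measure (density N p)" "sigma_finite_measure (density N q)"
    and [measurable]: "p \<in> borel_measurable N" "q \<in> borel_measurable N"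
    and le: "\<And>y. y \<in> space N \<Longrightarrow> p y \<le> c * q y"
    and A: "A \<in> sets (PiM I (\<lambda>_. N))"
  shows "emeasure (PiM I (\<lambda>_. density N p)) A \<le> c ^ card I * emeasure (PiM I (\<lambda>_. density N q)) A"
proof -
  have "emeasure (PiM I (\<lambda>_. density N p)) A
      = (\<integral>\<^sup>+\<omega>. (\<Prod>i\<in>I. p (\<omega> i)) * indicator A \<omega> \<partial>PiM I (\<lambda>_. N))"
    using A by (simp add: PiM_density[OF I N sf(1)] emeasure_density)
  also have "\<dots> \<le> (\<integral>\<^sup>+\<omega>. c ^ card I * ((\<Prod>i\<in>I. q (\<omega> i)) * indicator A \<omega>) \<partial>PiM I (\<lambda>_. N))"
  proof (intro nn_integral_mono)
    fix \<omega> assume "\<omega> \<in> space (PiM I (\<lambda>_. N))"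
    then have "(\<Prod>i\<in>I. p (\<omega> i)) \<le> (\<Prod>i\<in>I. c * q (\<omega> i))"
      by (intro prod_mono_ennreal le) (auto simp: space_PiM)
    then show "(\<Prod>i\<in>I. p (\<omega> i)) * indicator A \<omega> \<le> c ^ card I * ((\<Prod>i\<in>I. q (\<omega> i)) * indicator A \<omega>)"
      by (simp add: prod.distrib mult.assoc[symmetric] mult_right_mono)
  qed
  also have "\<dots> = c ^ card I * emeasure (PiM I (\<lambda>_. density N q)) A"
    using A by (simp add: nn_integral_cmult PiM_density[OF I N sf(2)] emeasure_density)
  finally show ?thesis .
qed

lemma abs_diff_le_of_mutual_bounds:
  fixes a b C :: real
  assumes "a \<le> C * b" "b \<le> C * a" "a \<le> 1" "b \<le> 1" "C \<ge> 1"
  shows "\<bar>a - b\<bar> \<le> C - 1"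
proof -
  have "(C - 1) * a \<le> C - 1" "(C - 1) * b \<le> C - 1"
    using assms by (simp_all add: mult_left_le)
  with assms show ?thesis by (auto simp: algebra_simps abs_le_iff)
qed

lemma measure_PiM_density_diff_le:
  fixes N :: "'a measure" and p q :: "'a \<Rightarrow> ennreal" and c :: real
  assumes I: "finite I" and N: "sigma_finite_measure N"
    and prob: "prob_space (density N p)" "prob_space (density N q)"
    and [measurable]: "p \<in> borel_measurable N" "q \<in> borel_measurable N"
    and pq: "\<And>y. y \<in> space N \<Longrightarrow> p y \<le> c * q y"
    and qp: "\<And>y. y \<in> space N \<Longrightarrow> q y \<le> c * p y"
    and c: "c \<ge> 1"
  shows "\<bar>measure (PiM I (\<lambda>_. density N p)) E - measure (PiM I (\<lambda>_. density N q)) E\<bar> \<le> c ^ card I - 1"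
proof (cases "E \<in> sets (PiM I (\<lambda>_. N))")
  case E: True
  interpret P: prob_space "PiM I (\<lambda>_. density N p)" by (rule prob_space_PiM) (rule prob(1))
  interpret Q: prob_space "PiM I (\<lambda>_. density N q)" by (rule prob_space_PiM) (rule prob(2))
  have sf: "sigma_finite_measure (density N p)" "sigma_finite_measure (density N q)"
    using prob by (simp_all add: prob_space_imp_sigma_finite)
  have "measure (PiM I (\<lambda>_. density N p)) E \<le> c ^ card I * measure (PiM I (\<lambda>_. density N q)) E"
    using emeasure_PiM_density_le[OF I N sf, of c E] pq E c
    by (simp add: P.emeasure_eq_measure Q.emeasure_eq_measure ennreal_power ennreal_mult'[symmetric])
  moreover have "measure (PiM I (\<lambda>_. density N q)) E \<le> c ^ card I * measure (PiM I (\<lambda>_. density N p)) E"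
    using emeasure_PiM_density_le[OF I N sf(2,1), of c E] qp E c
    by (simp add: P.emeasure_eq_measure Q.emeasure_eq_measure ennreal_power ennreal_mult'[symmetric])
  ultimately show ?thesis
    using c by (intro abs_diff_le_of_mutual_bounds) auto
next
  case False
  moreover have "sets (PiM I (\<lambda>_. density N p)) = sets (PiM I (\<lambda>_. N))"
    "sets (PiM I (\<lambda>_. density N q)) = sets (PiM I (\<lambda>_. N))"
    by (simp_all cong: sets_PiM_cong)
  ultimately show ?thesis
    using c by (simp add: measure_notin_sets)
qed

lemma emeasure_density_bounds:
  fixes f :: "'a \<Rightarrow> real"
  assumes [measurable]: "f \<in> borel_measurable M" "B \<in> sets M"
    and a: "a \<ge> 0" and f_bounds: "\<And>y. y \<in> B \<Longrightarrow> a \<le> f y \<and> f y \<le> b"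
  shows "ennreal a * emeasure M B \<le> emeasure (density M f) B"
    and "emeasure (density M f) B \<le> ennreal b * emeasure M B"
proof -
  have eq: "emeasure (density M f) B = (\<integral>\<^sup>+y. ennreal (f y) * indicator B y \<partial>M)"
    by (simp add: emeasure_density)
  have "(\<integral>\<^sup>+y. ennreal a * indicator B y \<partial>M) \<le> (\<integral>\<^sup>+y. ennreal (f y) * indicator B y \<partial>M)"
    by (intro nn_integral_mono) (auto simp: indicator_def f_bounds intro!: ennreal_leI)
  then show "ennreal a * emeasure M B \<le> emeasure (density M f) B"
    by (simp add: eq nn_integral_cmult_indicator)
  have "(\<integral>\<^sup>+y. ennreal (f y) * indicator B y \<partial>M) \<le> (\<integral>\<^sup>+y. ennreal b * indicator B y \<partial>M)"
    by (intro nn_integral_mono) (auto simp: indicator_def f_bounds intro!: ennreal_leI)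
  then show "emeasure (density M f) B \<le> ennreal b * emeasure M B"
    by (simp add: eq nn_integral_cmult_indicator)
qed

lemma normalised_density_ratio_bounds:
  fixes a b t V Z :: real
  assumes "0 < a" "a \<le> t" "t \<le> b" "0 < V" "a * V \<le> Z" "Z \<le> b * V"
  shows "t / Z \<le> b / a * (1 / V)" and "1 / V \<le> b / a * (t / Z)"
proof -
  have aV: "0 < a * V"
    using assms by simp
  then have Z: "0 < Z"
    using assms(5) by linarith
  show "t / Z \<le> b / a * (1 / V)"
    using assms aV by (simp add: frac_le)
  have "a * Z \<le> a * (b * V)"
    using assms by simp
  also have "\<dots> \<le> t * (b * V)"
    using assms by (intro mult_right_mono) auto
  finally show "1 / V \<le> b / a * (t / Z)"
    using assms Z by (simp add: field_simps)
qed

lemma measure_PiM_uniform_density_diff_le: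
  fixes M :: "'a measure" and f :: "'a \<Rightarrow> real"
  assumes I: "finite I" and M: "sigma_finite_measure M"
    and f[measurable]: "f \<in> borel_measurable M" and f_nonneg: "\<And>y. f y \<ge> 0"
    and B[measurable]: "B \<in> sets M" and B_pos: "emeasure M B \<noteq> 0" and B_fin: "emeasure M B \<noteq> \<infinity>"
    and a: "a > 0" and f_bounds: "\<And>y. y \<in> B \<Longrightarrow> a \<le> f y \<and> f y \<le> b"
  shows "\<bar>measure (PiM I (\<lambda>_. uniform_measure (density M f) B)) E
          - measure (PiM I (\<lambda>_. uniform_measure M B)) E\<bar> \<le> (b / a) ^ card I - 1"
proof -
  define V where "V = measure M B"
  define Z where "Z = measure (density M f) B"
  have eV: "emeasure M B = ennreal V"
    using B_fin by (simp add: V_def emeasure_eq_ennreal_measure)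
  have V: "V > 0"
    using B_pos eV by (simp add: V_def less_le)
  obtain y0 where "y0 \<in> B"
    using B_pos by fastforce
  then have ab: "a \<le> b" and b: "b > 0"
    using f_bounds[of y0] a by auto
  have Z_lower: "ennreal (a * V) \<le> emeasure (density M f) B"
    and Z_upper: "emeasure (density M f) B \<le> ennreal (b * V)"
    using emeasure_density_bounds[OF f B _ f_bounds] a b V by (simp_all add: eV ennreal_mult)
  have eZ: "emeasure (density M f) B = ennreal Z"
    using neq_top_trans[OF ennreal_neq_top Z_upper] by (simp add: Z_def emeasure_eq_ennreal_measure)
  have Z: "a * V \<le> Z" "Z \<le> b * V"
    using Z_lower Z_upper mult_pos_pos[OF a V] mult_pos_pos[OF b V] unfolding eZ
    by (auto simp: ennreal_le_iff2)
  then have Z_pos: "Z > 0"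
    using mult_pos_pos[OF a V] by linarith
  define p where "p y = ennreal (f y * indicator B y / Z)" for y
  define q where "q y = ennreal (indicator B y / V)" for y
  have [measurable]: "p \<in> borel_measurable M" "q \<in> borel_measurable M"
    unfolding p_def q_def by measurable
  have P_eq: "uniform_measure (density M f) B = density M p"
    unfolding uniform_measure_def eZ p_def
    by (subst density_density_eq)
       (auto intro!: density_cong simp: ennreal_indicator[symmetric] divide_ennreal Z_pos f_nonneg
         ennreal_mult'[symmetric])
  have U_eq: "uniform_measure M B = density M q"
    unfolding uniform_measure_def eV q_def
    by (intro density_cong) (auto simp: ennreal_indicator[symmetric] divide_ennreal V)
  have prob: "prob_space (density M p)" "prob_space (density M q)"
    unfolding P_eq[symmetric] U_eq[symmetric] using B_pos B_fin Z_pos eZ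
    by (auto intro!: prob_space_uniform_measure)
  have pq: "p y \<le> ennreal (b / a) * q y" and qp: "q y \<le> ennreal (b / a) * p y" for y
    using normalised_density_ratio_bounds[OF a _ _ V Z, of "f y"] f_bounds[of y] a b V Z_pos f_nonneg[of y]
    by (auto simp: p_def q_def indicator_def ennreal_mult'[symmetric] intro!: ennreal_leI)
  have "b / a \<ge> 1"
    using a ab by simp
  then show ?thesis
    unfolding P_eq U_eq using pq qp by (intro measure_PiM_density_diff_le[OF I M prob]) simp_all
qed

lemma voronoi_cell_affine_image:
  fixes x z :: "'a::euclidean_space"
  assumes r: "r > 0"
  shows "voronoi_cell (x + r *\<^sub>R z) ((\<lambda>s. x + r *\<^sub>R s) ` S) = (\<lambda>w. x + r *\<^sub>R w) ` voronoi_cell z S"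
proof -
  have dist_affine: "norm (r *\<^sub>R u - r *\<^sub>R v) = r * norm (u - v)" for u v :: 'a
    using r by (simp flip: scaleR_diff_right)
  have mem: "x + r *\<^sub>R w \<in> voronoi_cell (x + r *\<^sub>R z) ((\<lambda>s. x + r *\<^sub>R s) ` S) \<longleftrightarrow> w \<in> voronoi_cell z S"
    for w
    using r by (auto simp: voronoi_cell_def dist_affine)
  show ?thesis
  proof (intro set_eqI iffI)
    fix y assume y: "y \<in> voronoi_cell (x + r *\<^sub>R z) ((\<lambda>s. x + r *\<^sub>R s) ` S)"
    have "y = x + r *\<^sub>R ((1 / r) *\<^sub>R (y - x))"
      using r by simp
    with y mem show "y \<in> (\<lambda>w. x + r *\<^sub>R w) ` voronoi_cell z S"
      by (metis image_eqI)
  qed (auto simp: mem)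
qed

lemma affine_image_ball:
  fixes x :: "'a::euclidean_space"
  assumes r: "r > 0"
  shows "(\<lambda>w. x + r *\<^sub>R w) ` ball 0 \<rho> = ball x (r * \<rho>)"
proof -
  have "(\<lambda>w. x + r *\<^sub>R w) ` ball 0 \<rho> = (+) x ` (\<lambda>w. r *\<^sub>R w) ` ball 0 \<rho>"
    by (simp add: image_image)
  also have "\<dots> = ball x (r * \<rho>)"
    using r by (simp add: ball_scale)
  finally show ?thesis .
qed

lemma voronoi_cell_subset_ball_affine_iff:
  fixes x :: "'a::euclidean_space"
  assumes r: "r > 0"
  shows "voronoi_cell x ((\<lambda>s. x + r *\<^sub>R s) ` S) \<subseteq> ball x r \<longleftrightarrow> voronoi_cell 0 S \<subseteq> ball 0 1"
proof -
  have "inj (\<lambda>w. x + r *\<^sub>R w)"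
    using r by (auto intro: injI)
  moreover have "voronoi_cell x ((\<lambda>s. x + r *\<^sub>R s) ` S) = (\<lambda>w. x + r *\<^sub>R w) ` voronoi_cell 0 S"
    using voronoi_cell_affine_image[OF r, of x 0 S] by simp
  moreover have "ball x r = (\<lambda>w. x + r *\<^sub>R w) ` ball 0 1"
    using affine_image_ball[OF r, of x 1] by simp
  ultimately show ?thesis
    by (simp only: inj_image_subset_iff)
qed

lemma emeasure_lborel_eq_affine_preimage:
  fixes x :: "'a::euclidean_space"
  assumes r: "r > 0" and C: "C \<in> sets borel"
  shows "emeasure lborel C = ennreal (r ^ DIM('a)) * emeasure lborel ((\<lambda>z. x + r *\<^sub>R z) -` C)"
proof -
  have "emeasure lborel C = emeasure (density (distr lborel borel (\<lambda>z. x + r *\<^sub>R z)) (\<lambda>_. \<bar>r\<bar> ^ DIM('a))) C"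
    using lborel_affine[of r x] r by simp
  also have "\<dots> = ennreal (r ^ DIM('a)) * emeasure lborel ((\<lambda>z. x + r *\<^sub>R z) -` C)"
    using C r by (simp add: emeasure_density nn_integral_cmult_indicator emeasure_distr ennreal_power)
  finally show ?thesis .
qed

lemma distr_uniform_measure_ball_affine:
  fixes x :: "'a::euclidean_space"
  assumes r: "r > 0"
  shows "distr (uniform_measure lborel (ball 0 \<rho>)) lborel (\<lambda>z. x + r *\<^sub>R z) = uniform_measure lborel (ball x (r * \<rho>))"
proof (rule measure_eqI)
  fix A assume "A \<in> sets (distr (uniform_measure lborel (ball 0 \<rho>)) lborel (\<lambda>z. x + r *\<^sub>R z))"
  then have A[measurable]: "A \<in> sets borel"
    by simp
  let ?h = "\<lambda>z::'a. x + r *\<^sub>R z"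
  have preimage_ball: "?h -` ball x (r * \<rho>) = ball 0 \<rho>"
    using r by (auto simp: dist_norm)
  have scale: "emeasure lborel (ball x (r * \<rho>) \<inter> D) = ennreal (r ^ DIM('a)) * emeasure lborel (ball 0 \<rho> \<inter> ?h -` D)"
    if "D \<in> sets borel" for D
    using emeasure_lborel_eq_affine_preimage[OF r, of "ball x (r * \<rho>) \<inter> D" x] that preimage_ball
    by simp
  have r_pow: "ennreal (r ^ DIM('a)) \<noteq> 0" "ennreal (r ^ DIM('a)) \<noteq> \<infinity>"
    using r by auto
  have h_borel: "?h -` A \<in> sets borel"
    using measurable_sets[of ?h borel borel A] by simp
  have "emeasure (distr (uniform_measure lborel (ball 0 \<rho>)) lborel ?h) A
      = emeasure (uniform_measure lborel (ball 0 \<rho>)) (?h -` A)"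
    by (subst emeasure_distr) auto
  also have "\<dots> = emeasure lborel (ball 0 \<rho> \<inter> ?h -` A) / emeasure lborel (ball (0::'a) \<rho>)"
    using h_borel by simp
  also have "\<dots> = (emeasure lborel (ball 0 \<rho> \<inter> ?h -` A) * ennreal (r ^ DIM('a)))
      / (emeasure lborel (ball (0::'a) \<rho>) * ennreal (r ^ DIM('a)))"
    using divide_mult_eq[OF r_pow] by simp
  also have "\<dots> = emeasure lborel (ball x (r * \<rho>) \<inter> A) / emeasure lborel (ball x (r * \<rho>))"
    using scale[of A] scale[of UNIV] by (simp add: mult.commute)
  also have "\<dots> = emeasure (uniform_measure lborel (ball x (r * \<rho>))) A"
    by simp
  finally show "emeasure (distr (uniform_measure lborel (ball 0 \<rho>)) lborel ?h) A
      = emeasure (uniform_measure lborel (ball x (r * \<rho>))) A" .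
qed simp

lemma emeasure_lborel_ball_neq_0:
  fixes c :: "'a::euclidean_space"
  assumes "\<rho> > 0"
  shows "emeasure lborel (ball c \<rho>) \<noteq> 0"
  using content_ball_pos[OF assms, of c] by (auto simp: measure_def)

(* No measurability of A is needed: if A is not measurable, neither is its preimage under T,
   because pulling that preimage back along T' gives A again. *)
lemma measure_distr_eq_of_right_inverse:
  assumes T: "T \<in> M \<rightarrow>\<^sub>M N" and T': "T' \<in> N \<rightarrow>\<^sub>M M"
    and inv: "\<And>y. y \<in> space N \<Longrightarrow> T (T' y) = y" and A: "A \<subseteq> space N"
  shows "measure (distr M N T) A = measure M (T -` A \<inter> space M)"
proof (cases "A \<in> sets N")
  case True
  then show ?thesis
    by (rule measure_distr[OF T])
next
  case False
  have "T' -` (T -` A \<inter> space M) \<inter> space N = A"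
    using A inv measurable_space[OF T'] by auto
  then have "T -` A \<inter> space M \<notin> sets M"
    using False measurable_sets[OF T'] by metis
  then show ?thesis
    using False by (simp add: measure_notin_sets)
qed

lemma pk_xr_lborel:
  fixes x :: "'a::euclidean_space"
  assumes r: "r > 0"
  shows "pk_xr lborel x r k = pk k TYPE('a)"
proof -
  let ?h = "\<lambda>z::'a. x + r *\<^sub>R z" and ?h' = "\<lambda>y::'a. (1 / r) *\<^sub>R (y - x)"
  let ?U0 = "uniform_measure lborel (ball (0::'a) 2)" and ?Ur = "uniform_measure lborel (ball x (2 * r))"
  define S0 where "S0 = PiM {..<k} (\<lambda>_. ?U0)"
  define Sr where "Sr = PiM {..<k} (\<lambda>_. ?Ur)"
  have [measurable]: "?h \<in> ?U0 \<rightarrow>\<^sub>M ?Ur" "?h' \<in> ?Ur \<rightarrow>\<^sub>M ?U0"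
    by measurable
  have T: "compose {..<k} ?h \<in> S0 \<rightarrow>\<^sub>M Sr" and T': "compose {..<k} ?h' \<in> Sr \<rightarrow>\<^sub>M S0"
    unfolding S0_def Sr_def compose_def by measurable
  have space: "space S0 = PiE {..<k} (\<lambda>_. UNIV)" "space Sr = PiE {..<k} (\<lambda>_. UNIV)"
    by (simp_all add: S0_def Sr_def space_PiM)
  have "distr ?U0 ?Ur ?h = ?Ur"
    using distr_uniform_measure_ball_affine[OF r, of 2 x]
    by (metis (no_types) distr_cong mult.commute sets_uniform_measure)
  then have Sr_distr: "Sr = distr S0 Sr (compose {..<k} ?h)"
    unfolding S0_def Sr_def
    using emeasure_lborel_ball_finite[of "0::'a" 2] emeasure_lborel_ball_finite[of x "2 * r"]
    by (subst distr_PiM_finite_prob_space')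
       (auto intro!: prob_space_uniform_measure simp: emeasure_lborel_ball_neq_0 r)
  have inv: "compose {..<k} ?h (compose {..<k} ?h' y) = y" if "y \<in> space Sr" for y
    using that r by (auto simp: space compose_def PiE_def extensional_def)
  have image: "compose {..<k} ?h \<omega> ` {..<k} = ?h ` (\<omega> ` {..<k})" for \<omega>
    by (auto simp: compose_def)
  have "pk_xr lborel x r k = measure Sr {ys \<in> space Sr. voronoi_cell x (ys ` {..<k}) \<subseteq> ball x r}"
    by (simp add: pk_xr_def Sr_def)
  also have "\<dots> = measure S0 (compose {..<k} ?h -` {ys \<in> space Sr. voronoi_cell x (ys ` {..<k}) \<subseteq> ball x r}
                                \<inter> space S0)"
    by (subst Sr_distr, rule measure_distr_eq_of_right_inverse[OF T T']) (auto simp: inv)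
  also have "\<dots> = measure S0 {zs \<in> space S0. voronoi_cell 0 (zs ` {..<k}) \<subseteq> ball 0 1}"
    using measurable_space[OF T] r by (intro arg_cong[where f="measure S0"])
      (auto simp: image voronoi_cell_subset_ball_affine_iff)
  also have "\<dots> = pk k TYPE('a)"
    by (simp add: pk_def S0_def)
  finally show ?thesis .
qed

lemma abs_pk_xr_density_diff_le:
  fixes f :: "'a::euclidean_space \<Rightarrow> real"
  assumes f: "f \<in> borel_measurable borel" "\<And>y. f y \<ge> 0"
    and r: "r > 0" and a: "a > 0" and f_bounds: "\<And>y. y \<in> ball x (2 * r) \<Longrightarrow> a \<le> f y \<and> f y \<le> b"
  shows "\<bar>pk_xr (density lborel f) x r k - pk k TYPE('a)\<bar> \<le> (b / a) ^ k - 1"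
proof -
  have ball: "emeasure lborel (ball x (2 * r)) \<noteq> 0" "emeasure lborel (ball x (2 * r)) \<noteq> \<infinity>"
    using r emeasure_lborel_ball_finite[of x "2 * r"] by (simp_all add: emeasure_lborel_ball_neq_0)
  have "\<bar>pk_xr (density lborel f) x r k - pk_xr lborel x r k\<bar> \<le> (b / a) ^ card {..<k} - 1"
    unfolding pk_xr_def
    using measure_PiM_uniform_density_diff_le[of "{..<k}" lborel f "ball x (2 * r)" a b] f ball a f_bounds
    by (simp add: space_PiM sigma_finite_lborel)
  then show ?thesis
    using pk_xr_lborel[OF r, of x k] by simp
qed

lemma eventually_abs_pk_xr_density_diff_le:
  fixes f :: "'a::euclidean_space \<Rightarrow> real"
  assumes f: "f \<in> borel_measurable borel" "\<And>y. f y \<ge> 0"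
    and cont: "isCont f x" and fx: "f x > 0" and \<delta>: "0 < \<delta>" "\<delta> < 1"
  shows "\<forall>\<^sub>F r in at_right 0. \<bar>pk_xr (density lborel f) x r k - pk k TYPE('a)\<bar> \<le> ((1 + \<delta>) / (1 - \<delta>)) ^ k - 1"
proof -
  obtain \<eta> where \<eta>: "\<eta> > 0" and near: "\<And>y. dist y x < \<eta> \<Longrightarrow> \<bar>f y - f x\<bar> < \<delta> * f x"
    using cont fx \<delta> unfolding continuous_at_eps_delta by (metis dist_real_def mult_pos_pos)
  show ?thesis
    unfolding eventually_at_right_field
  proof (intro exI[of _ "\<eta> / 2"] conjI allI impI)
    fix r :: real assume r: "0 < r" "r < \<eta> / 2"
    have "(1 - \<delta>) * f x \<le> f y \<and> f y \<le> (1 + \<delta>) * f x" if "y \<in> ball x (2 * r)" for y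
      using near[of y] that r by (auto simp: dist_commute algebra_simps abs_less_iff)
    moreover have "(1 + \<delta>) * f x / ((1 - \<delta>) * f x) = (1 + \<delta>) / (1 - \<delta>)"
      using fx by simp
    ultimately show "\<bar>pk_xr (density lborel f) x r k - pk k TYPE('a)\<bar> \<le> ((1 + \<delta>) / (1 - \<delta>)) ^ k - 1"
      using abs_pk_xr_density_diff_le[OF f r(1), of "(1 - \<delta>) * f x" x "(1 + \<delta>) * f x" k] fx \<delta> by simp
  qed (use \<eta> in simp)
qed

theorem lemma3p12:
  fixes f :: "'a::euclidean_space \<Rightarrow> real" and mu :: "'a measure"
    and W :: "'a set" and x :: 'a and k :: nat
  assumes "continuous_on UNIV f"
    and "\<And>y. f y \<ge> 0"
    and "mu = density lborel (\<lambda>y. ennreal (f y))"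
    and "compact W" and "convex W"
    and "\<And>y. y \<in> W \<Longrightarrow> f y > 0"
    and "k \<ge> DIM('a) + 1"
    and "x \<in> W"
  shows "((\<lambda>r. pk_xr mu x r k) \<longlongrightarrow> pk k TYPE('a)) (at_right 0)"
proof (rule tendstoI)
  fix \<epsilon> :: real assume \<epsilon>: "\<epsilon> > 0"
  have "((\<lambda>\<delta>::real. ((1 + \<delta>) / (1 - \<delta>)) ^ k) \<longlongrightarrow> ((1 + 0) / (1 - 0)) ^ k) (at_right 0)"
    by (intro tendsto_intros) auto
  then have "\<forall>\<^sub>F \<delta> in at_right 0. ((1 + \<delta>) / (1 - \<delta>)) ^ k < 1 + \<epsilon>"
    using \<epsilon> by (intro order_tendstoD(2)) auto
  moreover have "\<forall>\<^sub>F \<delta> in at_right 0. 0 < \<delta> \<and> \<delta> < (1::real)"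
    by (intro eventually_conj eventually_at_right_less) (auto simp: eventually_at_right_field intro: exI[of _ 1])
  ultimately have "\<forall>\<^sub>F \<delta> in at_right 0. 0 < \<delta> \<and> \<delta> < 1 \<and> ((1 + \<delta>) / (1 - \<delta>)) ^ k - 1 < \<epsilon>"
    by eventually_elim auto
  then obtain \<delta> where \<delta>: "0 < \<delta>" "\<delta> < 1" "((1 + \<delta>) / (1 - \<delta>)) ^ k - 1 < \<epsilon>"
    using eventually_happens'[OF trivial_limit_at_right_real] by blast
  have "isCont f x" and "f \<in> borel_measurable borel"
    using assms(1) by (simp_all add: continuous_on_eq_continuous_at borel_measurable_continuous_onI)
  from eventually_abs_pk_xr_density_diff_le[OF this(2) assms(2) this(1) assms(6)[OF assms(8)] \<delta>(1,2), where k=k]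
  show "\<forall>\<^sub>F r in at_right 0. dist (pk_xr mu x r k) (pk k TYPE('a)) < \<epsilon>"
    by eventually_elim (use \<delta>(3) assms(3) in \<open>simp add: dist_real_def\<close>)
qed

end
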